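(* Let $H$ and $G$ be real Hilbert spaces, $Z$ a nonempty closed convex subset of $H\times G$, $x_0\in H\times G$, $\{\lambda_n\}\subset(0,1]$, and $\{H_n\}$ closed convex subsets of $H\times G$ with $Z\subset H_n$ for all $n$. Consider the iteration: for $n=0,1,\dots$, $x_{n+1/2}=x_n+\lambda_n(P_{H_n}(x_n)-x_n)$ and $x_{n+1}=P_{H(x_0,x_n)\cap C_n}(x_0)$, where $C_0=H(x_0,x_{1/2})$ and, for $n\ge1$, $C_n$ is given by one of: (a) $C_n=H(x_n,x_{n+1/2})\cap H(x_{n-1},x_{(n-1)+1/2})$; (b) $C_n=H(x_n,x_{n+1/2})\cap H(x_0,x_{n-1})$; (c) $C_n=H(x_n,x_{n+1/2})\cap H(x_0,\tau_nx_n+(1-\tau_n)x_{n-1})$ with $\tau_n\in(0,1)$. Then in each case the following hold: 1. $Z\subset H(x_0,x_n)\cap C_n$ for all $n$; 2. $\|x_{n+1}-x_0\|\ge\|x_n-x_0\|$ for all $n$; 3. $\sum_n\|x_{n+1}-x_n\|^2<+\infty$; 4. $\sum_n\|x_{n+1/2}-x_n\|^2<+\infty$; 5. if every weak sequential cluster point of $\{x_n\}$ lies in $Z$, then $x_n\to P_Z(x_0)$ strongly.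
   Context: $H\times G$ has the product Hilbert structure. For $x,y\in H\times G$, $H(x,y):=\{h:\ \langle h-y\mid x-y\rangle\le 0\}$ ($H(x,x)$ is the whole space). $P_D$ is the metric projection onto a nonempty closed convex set $D$. *)

theory Defs
  imports "HOL-Analysis.Analysis"
begin

text \<open>Metric projection onto a set D (for D nonempty closed convex in a real Hilbert
space this is the unique nearest point).  The library's closest_point needs heine_borel.\<close>
definition proj :: "'a::real_inner set \<Rightarrow> 'a \<Rightarrow> 'a" where
  "proj D x = (SOME p. p \<in> D \<and> (\<forall>y\<in>D. norm (x - p) \<le> norm (x - y)))"

definition hspace :: "'a::real_inner \<Rightarrow> 'a \<Rightarrow> 'a set" where
  "hspace x y = {h. inner (h - y) (x - y) \<le> 0}"

definition weak_conv :: "(nat \<Rightarrow> 'a::real_inner) \<Rightarrow> 'a \<Rightarrow> bool" where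
  "weak_conv u z \<longleftrightarrow> (\<forall>y. (\<lambda>j. inner (u j) y) \<longlonglongrightarrow> inner z y)"

definition weak_seq_cluster_point :: "(nat \<Rightarrow> 'a::real_inner) \<Rightarrow> 'a \<Rightarrow> bool" where
  "weak_seq_cluster_point u z \<longleftrightarrow> (\<exists>r. strict_mono r \<and> weak_conv (u \<circ> r) z)"

end

theory Submission
  imports Defs "HOL-Library.Diagonal_Subsequence"
begin

text \<open>Each iterate x (n+1) is the projection of x0 onto a closed convex set that contains Z and
  lies in the half-space H(x0, x n). Hence the distances to x0 increase, are bounded by the
  distance of P_Z x0, and Pythagoras in H(x0, x n) makes the squared steps telescope. The cuts
  contain Z because the half-space of a relaxed projection step, and that of a convex combination
  of two centres, contain everything the original half-spaces contain. Finally, a weak cluster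
  point in Z is no farther from x0 than P_Z x0, so it is P_Z x0, and weak convergence without
  gain in norm is strong convergence.\<close>

lemma summable_if_le_increments:
  fixes a g :: "nat \<Rightarrow> real"
  assumes "\<And>n. 0 \<le> a n" "\<And>n. a n \<le> g (Suc n) - g n" "\<And>n. g n \<le> B"
  shows "summable a"
proof -
  have "incseq g"
  proof (rule incseq_SucI)
    show "g n \<le> g (Suc n)" for n using assms(1,2)[of n] by linarith
  qed
  then obtain L where "g \<longlonglongrightarrow> L"
    using incseq_convergent assms(3) by blast
  then have "summable (\<lambda>n. g (Suc n) - g n)"
    by (rule telescope_summable)
  moreover have "norm (a n) \<le> g (Suc n) - g n" for n
    using assms(1,2)[of n] by simp
  ultimately show ?thesis
    by (rule summable_comparison_test')
qed

lemma tendsto_if_subseqs_have_tendsto_subseq: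
  fixes x :: "nat \<Rightarrow> 'a::metric_space"
  assumes "\<And>r::nat \<Rightarrow> nat. strict_mono r \<Longrightarrow> \<exists>s::nat \<Rightarrow> nat. strict_mono s \<and> (x \<circ> r \<circ> s) \<longlonglongrightarrow> p"
  shows "x \<longlonglongrightarrow> p"
proof (rule ccontr)
  assume "\<not> x \<longlonglongrightarrow> p"
  then obtain e where "e > 0" and "\<not> (\<forall>\<^sub>F n in sequentially. dist (x n) p < e)"
    unfolding tendsto_iff by blast
  then have "\<exists>\<^sub>F n in cofinite. e \<le> dist (x n) p"
    by (simp add: not_eventually not_less cofinite_eq_sequentially)
  then have "infinite {n. e \<le> dist (x n) p}"
    by (simp add: frequently_cofinite)
  from infinite_enumerate[OF this] obtain r :: "nat \<Rightarrow> nat"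
    where "strict_mono r" and far: "\<And>j. e \<le> dist (x (r j)) p"
    by blast
  then obtain s where "(x \<circ> r \<circ> s) \<longlonglongrightarrow> p"
    using assms by blast
  then obtain N where "\<And>j. N \<le> j \<Longrightarrow> dist (x (r (s j))) p < e"
    using \<open>e > 0\<close> unfolding tendsto_iff eventually_sequentially by auto
  then show False
    using far[of "s N"] by fastforce
qed

section \<open>Metric projection onto closed convex sets\<close>

lemma norm_add_square:
  fixes a b :: "'a::real_inner"
  shows "norm (a + b)^2 = norm a^2 + 2 * inner a b + norm b^2"
  using dot_norm[of a b] by simp

lemma norm_diff_scaleR_square:
  fixes u v :: "'a::real_inner"
  shows "norm (u - t *\<^sub>R v)^2 = norm u^2 - 2 * t * inner v u + t^2 * norm v^2"
  unfolding power2_norm_eq_inner by (simp add: inner_simps inner_commute power2_eq_square algebra_simps)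

lemma norm_diff_midpoint_square:
  fixes a b x :: "'a::real_inner"
  shows "norm (a - b)^2 = 2 * norm (x - a)^2 + 2 * norm (x - b)^2 - 4 * norm (x - (1/2) *\<^sub>R (a + b))^2"
  by (simp add: power2_norm_eq_inner inner_simps inner_commute algebra_simps)

text \<open>Midpoints of the terms stay in D, so the parallelogram law bounds the distance of two
  late terms by their excess over d = infdist x D.\<close>

lemma Cauchy_minimizing_sequence:
  fixes D :: "'a::real_inner set"
  assumes "convex D" "\<And>n. y n \<in> D" "0 \<le> d" "\<And>z. z \<in> D \<Longrightarrow> d \<le> norm (x - z)"
    and y_near: "\<And>n. norm (x - y n) < d + 1 / Suc n"
  shows "Cauchy y"
proof (rule metric_CauchyI)
  have y_close: "norm (y m - y n)^2 \<le> 4 * (2 * d + 1) / Suc N" if "N \<le> m" "N \<le> n" for m n N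
  proof -
    define b where "b = d + 1 / Suc N"
    have far: "norm (x - y k)^2 \<le> b^2" if "N \<le> k" for k
    proof -
      have "1 / real (Suc k) \<le> 1 / Suc N" using that by (simp add: frac_le)
      then show ?thesis using y_near[of k] by (intro power_mono) (auto simp: b_def)
    qed
    have "d^2 \<le> norm (x - (1/2) *\<^sub>R (y m + y n))^2"
      using assms(4) convexD[OF assms(1) assms(2)[of m] assms(2)[of n], of "1/2" "1/2"] assms(3)
      by (intro power_mono) (auto simp: scaleR_add_right)
    then have "norm (y m - y n)^2 \<le> 4 * (b^2 - d^2)"
      using norm_diff_midpoint_square[of "y m" "y n" x] far[OF that(1)] far[OF that(2)]
      by (simp add: algebra_simps)
    also have "b^2 - d^2 = (1 / Suc N) * (2 * d + 1 / Suc N)"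
      by (simp add: b_def power2_eq_square algebra_simps)
    also have "\<dots> \<le> (1 / Suc N) * (2 * d + 1)"
      by (intro mult_left_mono) auto
    finally show ?thesis by simp
  qed
  fix e :: real assume "e > 0"
  obtain N where N: "4 * (2 * d + 1) / e^2 < Suc N"
    using reals_Archimedean2 less_Suc_eq of_nat_less_iff order.strict_trans by metis
  then have "4 * (2 * d + 1) / Suc N < e^2"
    using \<open>e > 0\<close> by (simp add: field_simps)
  then have "\<forall>m\<ge>N. \<forall>n\<ge>N. (dist (y m) (y n))^2 < e^2"
    using y_close by (fastforce simp: dist_norm)
  then show "\<exists>M. \<forall>m\<ge>M. \<forall>n\<ge>M. dist (y m) (y n) < e"
    using \<open>e > 0\<close> by (meson power2_less_imp_less less_imp_le)
qed

lemma nearest_point_exists: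
  fixes D :: "'a::{real_inner,complete_space} set"
  assumes "D \<noteq> {}" "closed D" "convex D"
  shows "\<exists>p\<in>D. \<forall>y\<in>D. norm (x - p) \<le> norm (x - y)"
proof -
  define d where "d = infdist x D"
  have d_le: "d \<le> norm (x - y)" if "y \<in> D" for y
    using infdist_le[OF that, of x] by (simp add: d_def dist_norm)
  have "\<exists>y\<in>D. norm (x - y) < d + 1 / Suc n" for n
  proof (rule ccontr)
    assume "\<not> ?thesis"
    then have "d + 1 / Suc n \<le> infdist x D"
      unfolding infdist_notempty[OF assms(1)] by (intro cINF_greatest[OF assms(1)]) (auto simp: dist_norm)
    then show False by (simp add: d_def)
  qed
  then obtain y where yD: "\<And>n. y n \<in> D" and y_near: "\<And>n. norm (x - y n) < d + 1 / Suc n"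
    by metis
  have "Cauchy y"
    by (rule Cauchy_minimizing_sequence[OF assms(3) yD _ d_le y_near]) (simp add: d_def infdist_nonneg)
  then obtain p where p: "y \<longlonglongrightarrow> p"
    using Cauchy_convergent convergent_def by blast
  have "norm (x - p) \<le> d"
  proof (rule LIMSEQ_le)
    show "\<exists>N. \<forall>n\<ge>N. norm (x - y n) \<le> d + 1 / real (Suc n)"
      using y_near less_imp_le by blast
    show "(\<lambda>n. norm (x - y n)) \<longlonglongrightarrow> norm (x - p)" by (intro tendsto_intros p)
    show "(\<lambda>n. d + 1 / real (Suc n)) \<longlonglongrightarrow> d"
      using tendsto_add[OF tendsto_const LIMSEQ_inverse_real_of_nat, of d]
      by (simp add: inverse_eq_divide)
  qed
  then show ?thesis
    using closed_sequentially[OF assms(2) yD p] d_le by (blast intro: order_trans)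
qed

lemma
  fixes D :: "'a::{real_inner,complete_space} set"
  assumes "D \<noteq> {}" "closed D" "convex D"
  shows proj_mem: "proj D x \<in> D"
    and proj_nearest: "y \<in> D \<Longrightarrow> norm (x - proj D x) \<le> norm (x - y)"
  using someI_ex[OF nearest_point_exists[OF assms, of x, unfolded Bex_def]]
  unfolding proj_def by blast+

text \<open>If a point of D had an acute angle at p, moving p towards it would get closer to x.\<close>

lemma nearest_point_variational:
  fixes D :: "'a::real_inner set"
  assumes "convex D" "p \<in> D" "\<And>y. y \<in> D \<Longrightarrow> norm (x - p) \<le> norm (x - y)" "y \<in> D"
  shows "inner (y - p) (x - p) \<le> 0"
proof (rule ccontr)
  define a where "a = inner (y - p) (x - p)"
  define c where "c = norm (y - p)^2"
  assume "\<not> inner (y - p) (x - p) \<le> 0"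
  then have "a > 0" by (simp add: a_def)
  then have "c > 0" by (auto simp: a_def c_def)
  define t where "t = min 1 (a / c)"
  have t: "0 < t" "t \<le> 1" "t * c \<le> a"
    using \<open>a > 0\<close> \<open>c > 0\<close> by (auto simp: t_def min_def field_simps)
  have "(1 - t) *\<^sub>R p + t *\<^sub>R y \<in> D"
    using convexD[OF assms(1,2,4)] t by simp
  then have "norm (x - p) \<le> norm (x - ((1 - t) *\<^sub>R p + t *\<^sub>R y))"
    by (rule assms(3))
  also have "x - ((1 - t) *\<^sub>R p + t *\<^sub>R y) = (x - p) - t *\<^sub>R (y - p)"
    by (simp add: algebra_simps)
  finally have "norm (x - p)^2 \<le> norm ((x - p) - t *\<^sub>R (y - p))^2"
    by (intro power_mono) auto
  also have "\<dots> = norm (x - p)^2 - t * (2 * a - t * c)"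
    unfolding norm_diff_scaleR_square a_def c_def by (simp add: inner_commute power2_eq_square algebra_simps)
  finally have "t * (2 * a - t * c) \<le> 0" by simp
  moreover have "0 < t * (2 * a - t * c)"
    using t \<open>a > 0\<close> by (intro mult_pos_pos) auto
  ultimately show False by simp
qed

lemma proj_variational:
  fixes D :: "'a::{real_inner,complete_space} set"
  assumes "D \<noteq> {}" "closed D" "convex D" "y \<in> D"
  shows "inner (y - proj D x) (x - proj D x) \<le> 0"
  using nearest_point_variational[OF assms(3) proj_mem proj_nearest] assms by blast

lemma proj_unique:
  fixes D :: "'a::{real_inner,complete_space} set"
  assumes "D \<noteq> {}" "closed D" "convex D" "y \<in> D" "norm (x - y) \<le> norm (x - proj D x)"
  shows "y = proj D x"
proof -
  have "inner (proj D x - y) (x - y) \<le> 0"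
    using assms proj_mem proj_nearest[OF assms(1-3)]
    by (intro nearest_point_variational[OF assms(3,4)]) (blast intro: order_trans)+
  moreover have "inner (y - proj D x) (x - proj D x) \<le> 0"
    by (rule proj_variational[OF assms(1-4)])
  moreover have "inner (proj D x - y) (x - y) + inner (y - proj D x) (x - proj D x) = norm (y - proj D x)^2"
    by (simp add: power2_norm_eq_inner inner_simps inner_commute algebra_simps)
  ultimately have "norm (y - proj D x)^2 \<le> 0" by linarith
  then show ?thesis by simp
qed

lemma proj_subspace_orthogonal:
  fixes V :: "'a::{real_inner,complete_space} set"
  assumes "closed V" "subspace V" "v \<in> V"
  shows "inner v (y - proj V y) = 0"
proof -
  have V: "V \<noteq> {}" "closed V" "convex V"
    using assms by (auto intro: subspace_imp_convex)
  have "proj V y + v \<in> V" "proj V y - v \<in> V"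
    using proj_mem[OF V] assms(2,3) by (auto intro: subspace_add subspace_diff)
  then have "inner v (y - proj V y) \<le> 0" "inner (- v) (y - proj V y) \<le> 0"
    using proj_variational[OF V, of "proj V y + v" y] proj_variational[OF V, of "proj V y - v" y]
    by auto
  then show ?thesis by simp
qed

section \<open>Weak sequential compactness of bounded sequences\<close>

lemma abs_inner_le_bound:
  fixes a y :: "'a::real_inner"
  assumes "norm a \<le> M"
  shows "\<bar>inner a y\<bar> \<le> M * norm y"
  using Cauchy_Schwarz_ineq2[of a y] mult_right_mono[OF assms norm_ge_zero[of y]] by linarith

lemma bounded_linear_inner_representation:
  fixes f :: "'a::{real_inner,complete_space} \<Rightarrow> real"
  assumes "bounded_linear f"
  shows "\<exists>z. \<forall>y. f y = inner z y"
proof (cases "\<forall>y. f y = 0")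
  case True
  then show ?thesis by (intro exI[of _ 0]) simp
next
  case False
  then obtain w where "f w \<noteq> 0" by auto
  interpret f: bounded_linear f by (rule assms)
  define N where "N = {y. f y = 0}"
  have "closed N" unfolding N_def
    by (intro closed_Collect_eq linear_continuous_on assms continuous_on_const)
  moreover have "subspace N"
    by (auto simp: N_def subspace_def f.add f.scaleR f.zero)
  ultimately have proj_N: "proj N w \<in> N" and orth: "\<And>n. n \<in> N \<Longrightarrow> inner n (w - proj N w) = 0"
    using proj_mem[of N] proj_subspace_orthogonal subspace_0 subspace_imp_convex by blast+
  define v where "v = w - proj N w"
  have fv: "f v \<noteq> 0"
    using \<open>f w \<noteq> 0\<close> proj_N by (simp add: v_def N_def f.diff)
  then have "inner v v \<noteq> 0" using f.zero by auto
  have "inner y v = (f y / f v) * inner v v" for y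
  proof -
    have "y - (f y / f v) *\<^sub>R v \<in> N"
      using fv by (simp add: N_def f.diff f.scaleR)
    then show ?thesis
      using orth unfolding v_def[symmetric] by (fastforce simp: inner_diff_left)
  qed
  then have "f y = inner ((f v / inner v v) *\<^sub>R v) y" for y
    using fv \<open>inner v v \<noteq> 0\<close> by (simp add: inner_commute[of v y] field_simps)
  then show ?thesis by blast
qed

lemma subseq_convergent_inner_terms:
  fixes u :: "nat \<Rightarrow> 'a::real_inner"
  assumes "\<And>n. norm (u n) \<le> M"
  shows "\<exists>r. strict_mono r \<and> (\<forall>k. convergent (\<lambda>j. inner (u (r j)) (u k)))"
proof -
  define P where "P k s \<longleftrightarrow> convergent (\<lambda>j. inner (u (s j)) (u k))" for k s
  have bounded: "norm (inner (u i) (u k)) \<le> M * M" for i k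
  proof -
    have "norm (inner (u i) (u k)) \<le> norm (u i) * norm (u k)"
      using Cauchy_Schwarz_ineq2 by simp
    also have "\<dots> \<le> M * M"
      using assms order_trans[OF norm_ge_zero assms] by (intro mult_mono) auto
    finally show ?thesis .
  qed
  interpret subseqs P
  proof
    fix k and s :: "nat \<Rightarrow> nat"
    obtain r where r: "strict_mono r" "monoseq (\<lambda>j. inner (u (s (r j))) (u k))"
      using seq_monosub[of "\<lambda>j. inner (u (s j)) (u k)"] by blast
    have "convergent (\<lambda>j. inner (u (s (r j))) (u k))"
      by (rule Bseq_monoseq_convergent[OF BseqI'[OF bounded] r(2)])
    then show "\<exists>r. strict_mono r \<and> P k (s \<circ> r)" using r by (auto simp: P_def o_def)
  qed
  have stable: "P k (s \<circ> r)" if "strict_mono r" "P k s" for k r s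
    using convergent_subseq_convergent[OF that(2)[unfolded P_def] that(1)] by (simp add: P_def o_def)
  have "convergent (\<lambda>j. inner (u (diagseq j)) (u k))" for k
  proof -
    have "P k (diagseq \<circ> (+) (Suc k))"
      by (rule diagseq_holds[OF stable])
    then have "convergent (\<lambda>j. inner (u (diagseq (j + Suc k))) (u k))"
      by (simp add: P_def o_def add.commute)
    then show ?thesis
      by (rule convergent_ignore_initial_segment[THEN iffD1])
  qed
  then show ?thesis using subseq_diagseq by blast
qed

lemma subspace_convergent_inner: "subspace {y. convergent (\<lambda>j. inner (u j) y)}"
  unfolding subspace_def
  by (auto simp: inner_add_right intro!: convergent_add convergent_mult convergent_const)

lemma closed_convergent_inner:
  fixes u :: "nat \<Rightarrow> 'a::real_inner"
  assumes bound: "\<And>n. norm (u n) \<le> M"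
  shows "closed {y. convergent (\<lambda>j. inner (u j) y)}"
proof -
  have "Cauchy (\<lambda>j. inner (u j) y)"
    if y: "y \<in> closure {y. convergent (\<lambda>j. inner (u j) y)}" for y
  proof (rule metric_CauchyI)
    fix e :: real assume "0 < e"
    have "0 \<le> M" "M + 1 \<noteq> 0"
      using order_trans[OF norm_ge_zero bound] by auto
    define \<delta> where "\<delta> = e / 3 / (M + 1)"
    have "0 < \<delta>" using \<open>0 < e\<close> \<open>0 \<le> M\<close> by (simp add: \<delta>_def)
    then obtain s where s: "convergent (\<lambda>j. inner (u j) s)" and "dist s y < \<delta>"
      using y unfolding closure_approachable by blast
    have near: "\<bar>inner (u j) (y - s)\<bar> < e / 3" for j
    proof -
      have "\<bar>inner (u j) (y - s)\<bar> \<le> (M + 1) * norm (y - s)"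
        using abs_inner_le_bound[of "u j" "M + 1" "y - s"] bound[of j] by simp
      also have "\<dots> < (M + 1) * \<delta>"
        using \<open>dist s y < \<delta>\<close> \<open>0 \<le> M\<close> by (simp add: dist_norm norm_minus_commute)
      also have "\<dots> = e / 3"
        unfolding \<delta>_def using \<open>M + 1 \<noteq> 0\<close> by (metis nonzero_mult_div_cancel_left times_divide_eq_right)
      finally show ?thesis .
    qed
    obtain N where N: "\<And>m n. N \<le> m \<Longrightarrow> N \<le> n \<Longrightarrow> dist (inner (u m) s) (inner (u n) s) < e / 3"
      using metric_CauchyD[OF convergent_Cauchy[OF s], of "e / 3"] \<open>0 < e\<close> by auto
    have "dist (inner (u m) y) (inner (u n) y) < e" if "N \<le> m" "N \<le> n" for m n
      using near[of m] near[of n] N[OF that] unfolding dist_real_def inner_diff_right by arith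
    then show "\<exists>N. \<forall>m\<ge>N. \<forall>n\<ge>N. dist (inner (u m) y) (inner (u n) y) < e" by blast
  qed
  then have "closure {y. convergent (\<lambda>j. inner (u j) y)} \<subseteq> {y. convergent (\<lambda>j. inner (u j) y)}"
    using real_Cauchy_convergent by blast
  then show ?thesis
    by (simp only: closure_subset_eq)
qed

text \<open>The y with convergent inner products form a closed subspace W containing every u k, and
  y - proj W y is orthogonal to all u k.\<close>

lemma convergent_inner_if_convergent_on_terms:
  fixes u :: "nat \<Rightarrow> 'a::{real_inner,complete_space}"
  assumes "\<And>n. norm (u n) \<le> M" "\<And>k. convergent (\<lambda>j. inner (u j) (u k))"
  shows "convergent (\<lambda>j. inner (u j) y)"
proof -
  define W where "W = {y. convergent (\<lambda>j. inner (u j) y)}"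
  have W: "closed W" "subspace W"
    unfolding W_def by (rule closed_convergent_inner[OF assms(1)] subspace_convergent_inner)+
  then have "inner (u k) (y - proj W y) = 0" for k
    using assms(2) by (intro proj_subspace_orthogonal) (auto simp: W_def)
  then have "(\<lambda>j. inner (u j) y) = (\<lambda>j. inner (u j) (proj W y))"
    by (simp add: inner_diff_right)
  moreover have "proj W y \<in> W"
    using W by (intro proj_mem) (auto intro: subspace_imp_convex subspace_0)
  ultimately show ?thesis by (simp add: W_def)
qed

lemma weak_conv_if_convergent_inner:
  fixes u :: "nat \<Rightarrow> 'a::{real_inner,complete_space}"
  assumes bound: "\<And>n. norm (u n) \<le> M" and conv: "\<And>y. convergent (\<lambda>j. inner (u j) y)"
  shows "\<exists>z. weak_conv u z"
proof -
  define f where "f y = lim (\<lambda>j. inner (u j) y)" for y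
  have lim: "(\<lambda>j. inner (u j) y) \<longlonglongrightarrow> f y" for y
    using conv by (simp add: f_def convergent_LIMSEQ_iff)
  have "bounded_linear f"
  proof (rule bounded_linear_intro[where K=M])
    show "f (y + w) = f y + f w" for y w
      using lim[of "y + w"] tendsto_add[OF lim lim] by (intro LIMSEQ_unique) (simp_all add: inner_add_right)
    show "f (c *\<^sub>R y) = c *\<^sub>R f y" for c y
      using lim[of "c *\<^sub>R y"] tendsto_mult_left[OF lim, of c] by (intro LIMSEQ_unique) simp_all
    show "norm (f y) \<le> norm y * M" for y
    proof -
      have "\<bar>inner (u j) y\<bar> \<le> M * norm y" for j
        using abs_inner_le_bound[OF bound] .
      then have "\<bar>f y\<bar> \<le> M * norm y"
        using tendsto_rabs[OF lim] by (blast intro: LIMSEQ_le_const2)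
      then show ?thesis by (simp add: mult.commute)
    qed
  qed
  then obtain z where "\<And>y. f y = inner z y"
    using bounded_linear_inner_representation by blast
  then show ?thesis using lim by (auto simp: weak_conv_def)
qed

lemma bounded_seq_weak_conv_subseq:
  fixes u :: "nat \<Rightarrow> 'a::{real_inner,complete_space}"
  assumes bound: "\<And>n. norm (u n) \<le> M"
  shows "\<exists>r z. strict_mono r \<and> weak_conv (u \<circ> r) z"
proof -
  obtain r where r: "strict_mono r" "\<And>k. convergent (\<lambda>j. inner (u (r j)) (u k))"
    using subseq_convergent_inner_terms[of u M] bound by blast
  have "convergent (\<lambda>j. inner ((u \<circ> r) j) y)" for y
    using convergent_inner_if_convergent_on_terms[of "u \<circ> r" M y] bound r(2) by simp
  then show ?thesis
    using r(1) weak_conv_if_convergent_inner[of "u \<circ> r" M] bound by auto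
qed

lemma weak_conv_norm_le:
  fixes w :: "nat \<Rightarrow> 'a::real_inner"
  assumes "weak_conv w y" "\<And>j. norm (w j - c) \<le> d"
  shows "norm (y - c) \<le> d"
proof -
  have "(\<lambda>j. inner (w j) (y - c)) \<longlonglongrightarrow> inner y (y - c)"
    using assms(1) by (simp add: weak_conv_def)
  then have "(\<lambda>j. inner (w j - c) (y - c)) \<longlonglongrightarrow> inner (y - c) (y - c)"
    unfolding inner_diff_left by (intro tendsto_diff tendsto_const)
  moreover have "inner (w j - c) (y - c) \<le> d * norm (y - c)" for j
    using abs_inner_le_bound[OF assms(2)] abs_le_D1 by blast
  ultimately have "inner (y - c) (y - c) \<le> d * norm (y - c)"
    by (intro LIMSEQ_le_const2) auto
  then have "norm (y - c) * norm (y - c) \<le> d * norm (y - c)"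
    by (metis power2_eq_square power2_norm_eq_inner)
  moreover have "0 \<le> d" using order_trans[OF norm_ge_zero assms(2)] .
  ultimately show ?thesis
    using mult_right_le_imp_le[of "norm (y - c)" "norm (y - c)" d]
    by (cases "norm (y - c) = 0") simp_all
qed

lemma weak_conv_norm_le_imp_tendsto:
  fixes w :: "nat \<Rightarrow> 'a::real_inner"
  assumes "weak_conv w p" "\<And>j. norm (w j - c) \<le> norm (p - c)"
  shows "w \<longlonglongrightarrow> p"
proof -
  define d where "d = norm (p - c)"
  have upper: "norm (w j - p)^2 \<le> 2 * d^2 - 2 * inner (p - c) (w j - c)" for j
    using norm_diff_scaleR_square[of "w j - c" 1 "p - c"] assms(2)[of j]
    by (simp add: d_def power_mono)
  have weak: "(\<lambda>j. inner (p - c) (w j)) \<longlonglongrightarrow> inner (p - c) p"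
    using assms(1) by (simp add: weak_conv_def inner_commute[of "p - c"])
  then have "(\<lambda>j. 2 * d^2 - 2 * inner (p - c) (w j - c)) \<longlonglongrightarrow> 2 * d^2 - 2 * inner (p - c) (p - c)"
    unfolding inner_diff_right by (intro tendsto_diff tendsto_mult_left tendsto_const weak)
  moreover have "2 * d^2 - 2 * inner (p - c) (p - c) = 0"
    by (simp add: d_def power2_norm_eq_inner)
  ultimately have upper_lim: "(\<lambda>j. 2 * d^2 - 2 * inner (p - c) (w j - c)) \<longlonglongrightarrow> 0"
    by simp
  have "(\<lambda>j. norm (w j - p)^2) \<longlonglongrightarrow> 0"
    by (rule tendsto_sandwich[OF _ _ tendsto_const upper_lim]) (simp_all add: upper)
  from tendsto_real_sqrt[OF this] have "(\<lambda>j. norm (w j - p)) \<longlonglongrightarrow> 0"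
    by simp
  then show ?thesis
    by (simp add: tendsto_norm_zero_iff LIM_zero_iff)
qed

section \<open>Half-spaces\<close>

lemma mem_hspace: "h \<in> hspace x y \<longleftrightarrow> inner (h - y) (x - y) \<le> 0"
  by (simp add: hspace_def)

lemma hspace_eq_halfspace_le: "hspace x y = {h. inner (x - y) h \<le> inner (x - y) y}"
  by (auto simp: hspace_def inner_diff_left inner_commute)

lemma closed_hspace: "closed (hspace x y)"
  unfolding hspace_eq_halfspace_le by (rule closed_halfspace_le)

lemma convex_hspace: "convex (hspace x y)"
  unfolding hspace_eq_halfspace_le by (rule convex_halfspace_le)

lemma hspace_same [simp]: "hspace x x = UNIV"
  by (simp add: hspace_def)

lemma norm_square_le_if_mem_hspace:
  fixes h x y :: "'a::real_inner"
  assumes "h \<in> hspace x y"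
  shows "norm (y - x)^2 + norm (h - y)^2 \<le> norm (h - x)^2"
  using assms norm_add_square[of "h - y" "y - x"]
  by (simp add: mem_hspace inner_diff_right inner_commute[of "h - y"] algebra_simps)

lemma subset_hspace_proj:
  fixes D :: "'a::{real_inner,complete_space} set"
  assumes "D \<noteq> {}" "closed D" "convex D"
  shows "D \<subseteq> hspace x (proj D x)"
  using proj_variational[OF assms] by (auto simp: mem_hspace)

text \<open>Since 0 < l \<le> 1, the relaxed point x + l (P_D x - x) lies between x and P_D x, so its
  half-space contains that of P_D x.\<close>

lemma subset_hspace_relaxed_proj:
  fixes D :: "'a::{real_inner,complete_space} set"
  assumes "D \<noteq> {}" "closed D" "convex D" "0 < l" "l \<le> 1"
  shows "D \<subseteq> hspace x (x + l *\<^sub>R (proj D x - x))"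
proof
  fix z assume "z \<in> D"
  define v where "v = x - proj D x"
  have "inner (z - (x + l *\<^sub>R (proj D x - x))) (x - (x + l *\<^sub>R (proj D x - x)))
      = l * inner (z - proj D x) v - l * (1 - l) * inner v v"
    by (simp add: v_def inner_simps inner_commute algebra_simps)
  moreover have "l * inner (z - proj D x) v \<le> 0"
    using proj_variational[OF assms(1-3) \<open>z \<in> D\<close>] assms(4) by (simp add: v_def mult_nonneg_nonpos)
  moreover have "0 \<le> l * (1 - l) * inner v v"
    using assms(4,5) by simp
  ultimately show "z \<in> hspace x (x + l *\<^sub>R (proj D x - x))"
    unfolding mem_hspace by linarith
qed

text \<open>The map y \<mapsto> inner (h - y) (x - y) is a convex quadratic function of y.\<close>

lemma hspace_Int_subset_hspace_convex_comb:
  fixes x y y' :: "'a::real_inner"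
  assumes "0 \<le> t" "t \<le> 1"
  shows "hspace x y \<inter> hspace x y' \<subseteq> hspace x (t *\<^sub>R y + (1 - t) *\<^sub>R y')"
proof
  fix h assume h: "h \<in> hspace x y \<inter> hspace x y'"
  let ?m = "t *\<^sub>R y + (1 - t) *\<^sub>R y'"
  have "inner (h - ?m) (x - ?m) = t * inner (h - y) (x - y) + (1 - t) * inner (h - y') (x - y')
      - t * (1 - t) * inner (y - y') (y - y')"
    by (simp add: inner_simps inner_commute algebra_simps)
  moreover have "t * inner (h - y) (x - y) \<le> 0" "(1 - t) * inner (h - y') (x - y') \<le> 0"
    using h assms by (auto simp: mem_hspace mult_nonneg_nonpos)
  moreover have "0 \<le> t * (1 - t) * inner (y - y') (y - y')"
    using assms by simp
  ultimately show "h \<in> hspace x ?m"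
    unfolding mem_hspace by linarith
qed

section \<open>Outer approximation sequences\<close>

locale outer_approximation =
  fixes Z :: "'a::{real_inner,complete_space} set"
    and x0 :: 'a
    and D :: "nat \<Rightarrow> 'a set"
    and x :: "nat \<Rightarrow> 'a"
  assumes Z: "Z \<noteq> {}" "closed Z" "convex Z"
    and D: "\<And>n. closed (D n)" "\<And>n. convex (D n)" "\<And>n. Z \<subseteq> D n" "\<And>n. D n \<subseteq> hspace x0 (x n)"
    and start: "x 0 = x0"
    and step: "\<And>n. x (Suc n) = proj (D n) x0"
begin

lemma D_nonempty: "D n \<noteq> {}"
  using Z(1) D(3) by blast

lemma x_Suc_mem: "x (Suc n) \<in> D n"
  unfolding step by (rule proj_mem[OF D_nonempty D(1,2)])

lemma norm_le_dist_proj: "norm (x n - x0) \<le> norm (proj Z x0 - x0)"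
proof (cases n)
  case (Suc m)
  have "proj Z x0 \<in> D m"
    using D(3) proj_mem[OF Z] by blast
  then have "norm (x0 - x (Suc m)) \<le> norm (x0 - proj Z x0)"
    unfolding step by (rule proj_nearest[OF D_nonempty D(1,2)])
  then show ?thesis
    by (simp only: Suc norm_minus_commute)
qed (simp add: start)

lemma norm_square_step: "norm (x n - x0)^2 + norm (x (Suc n) - x n)^2 \<le> norm (x (Suc n) - x0)^2"
  using x_Suc_mem D(4) by (intro norm_square_le_if_mem_hspace) blast

lemma norm_dist_mono: "norm (x n - x0) \<le> norm (x (Suc n) - x0)"
proof (rule power2_le_imp_le)
  show "norm (x n - x0)^2 \<le> norm (x (Suc n) - x0)^2"
    using norm_square_step[of n] zero_le_power2[of "norm (x (Suc n) - x n)"] by linarith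
qed simp

lemma summable_step_square: "summable (\<lambda>n. norm (x (Suc n) - x n)^2)"
proof (rule summable_if_le_increments)
  show "norm (x (Suc n) - x n)^2 \<le> norm (x (Suc n) - x0)^2 - norm (x n - x0)^2" for n
    using norm_square_step[of n] by linarith
  show "norm (x n - x0)^2 \<le> norm (proj Z x0 - x0)^2" for n
    using norm_le_dist_proj[of n] by (simp add: power_mono)
qed simp

lemma tendsto_proj:
  assumes "\<And>z. weak_seq_cluster_point x z \<Longrightarrow> z \<in> Z"
  shows "x \<longlonglongrightarrow> proj Z x0"
proof (rule tendsto_if_subseqs_have_tendsto_subseq)
  fix r :: "nat \<Rightarrow> nat" assume "strict_mono r"
  have "norm ((x \<circ> r) n) \<le> norm x0 + norm (proj Z x0 - x0)" for n
    using norm_le_dist_proj[of "r n"] norm_triangle_sub[of "x (r n)" x0] unfolding o_def by linarith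
  then obtain s y where "strict_mono s" and weak: "weak_conv (x \<circ> r \<circ> s) y"
    using bounded_seq_weak_conv_subseq[of "x \<circ> r"] by blast
  then have "y \<in> Z"
    using assms \<open>strict_mono r\<close> strict_mono_o
    unfolding weak_seq_cluster_point_def by (metis o_assoc)
  moreover have "norm (y - x0) \<le> norm (proj Z x0 - x0)"
    by (rule weak_conv_norm_le[OF weak]) (simp add: norm_le_dist_proj)
  ultimately have "y = proj Z x0"
    using proj_unique[OF Z] by (simp add: norm_minus_commute)
  then have "(x \<circ> r \<circ> s) \<longlonglongrightarrow> proj Z x0"
    using weak by (intro weak_conv_norm_le_imp_tendsto[where c = x0]) (simp_all add: norm_le_dist_proj)
  then show "\<exists>s. strict_mono s \<and> (x \<circ> r \<circ> s) \<longlonglongrightarrow> proj Z x0"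
    using \<open>strict_mono s\<close> by blast
qed

end

lemma subset_hspace_Int_cuts:
  fixes Z :: "'a::{real_inner,complete_space} set"
  assumes Z: "Z \<noteq> {}" "closed Z" "convex Z"
    and C: "\<And>n. closed (C n)" "\<And>n. convex (C n)"
    and start: "x 0 = x0" and step: "\<And>n. x (Suc n) = proj (hspace x0 (x n) \<inter> C n) x0"
    and C0: "Z \<subseteq> C 0"
    and C_Suc: "\<And>n. Z \<subseteq> hspace x0 (x n) \<Longrightarrow> Z \<subseteq> hspace x0 (x (Suc n)) \<Longrightarrow> Z \<subseteq> C (Suc n)"
  shows "Z \<subseteq> hspace x0 (x n) \<inter> C n"
proof (induction n)
  case 0
  show ?case using C0 by (simp add: start)
next
  case (Suc n)
  then have "hspace x0 (x n) \<inter> C n \<noteq> {}"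
    using Z(1) by blast
  then have "Z \<subseteq> hspace x0 (x (Suc n))"
    using Suc subset_hspace_proj[of "hspace x0 (x n) \<inter> C n" x0] C
    by (auto simp: step closed_hspace convex_hspace closed_Int convex_Int)
  then show ?case
    using Suc C_Suc by blast
qed

lemma cuts_common_form:
  assumes "(\<forall>n\<ge>1. C n = hspace (x n) (xh n) \<inter> hspace (x (n - 1)) (xh (n - 1)))
       \<or> (\<forall>n\<ge>1. C n = hspace (x n) (xh n) \<inter> hspace x0 (x (n - 1)))
       \<or> (\<exists>\<tau>::nat \<Rightarrow> real. (\<forall>n\<ge>1. 0 < \<tau> n \<and> \<tau> n < 1) \<and>
            (\<forall>n\<ge>1. C n = hspace (x n) (xh n) \<inter>
                        hspace x0 (\<tau> n *\<^sub>R x n + (1 - \<tau> n) *\<^sub>R x (n - 1))))"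
    and Z_half: "\<And>n. Z \<subseteq> hspace (x n) (xh n)"
  obtains A where "\<And>n. 1 \<le> n \<Longrightarrow> C n = hspace (x n) (xh n) \<inter> A n"
    and "\<And>n. closed (A n) \<and> convex (A n)"
    and "\<And>n. 1 \<le> n \<Longrightarrow> Z \<subseteq> hspace x0 (x n) \<Longrightarrow> Z \<subseteq> hspace x0 (x (n - 1)) \<Longrightarrow> Z \<subseteq> A n"
  using assms(1)
proof (elim disjE exE conjE)
  assume "\<forall>n\<ge>1. C n = hspace (x n) (xh n) \<inter> hspace (x (n - 1)) (xh (n - 1))"
  then show thesis
    using Z_half by (intro that[of "\<lambda>n. hspace (x (n - 1)) (xh (n - 1))"]) (auto simp: closed_hspace convex_hspace)
next
  assume "\<forall>n\<ge>1. C n = hspace (x n) (xh n) \<inter> hspace x0 (x (n - 1))"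
  then show thesis
    by (intro that[of "\<lambda>n. hspace x0 (x (n - 1))"]) (auto simp: closed_hspace convex_hspace)
next
  fix \<tau> :: "nat \<Rightarrow> real"
  assume \<tau>: "\<forall>n\<ge>1. 0 < \<tau> n \<and> \<tau> n < 1"
    and "\<forall>n\<ge>1. C n = hspace (x n) (xh n) \<inter> hspace x0 (\<tau> n *\<^sub>R x n + (1 - \<tau> n) *\<^sub>R x (n - 1))"
  moreover have "hspace x0 (x n) \<inter> hspace x0 (x (n - 1)) \<subseteq> hspace x0 (\<tau> n *\<^sub>R x n + (1 - \<tau> n) *\<^sub>R x (n - 1))"
    if "1 \<le> n" for n
    using \<tau> that by (intro hspace_Int_subset_hspace_convex_comb) auto
  ultimately show thesis
    by (intro that[of "\<lambda>n. hspace x0 (\<tau> n *\<^sub>R x n + (1 - \<tau> n) *\<^sub>R x (n - 1))"])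
      (blast, simp add: closed_hspace convex_hspace, blast)
qed

theorem proposition8:
  fixes Z :: "('h::{real_inner,complete_space} \<times> 'g::{real_inner,complete_space}) set"
    and x0 :: "'h \<times> 'g"
    and lam :: "nat \<Rightarrow> real"
    and Hs C :: "nat \<Rightarrow> ('h \<times> 'g) set"
    and x xh :: "nat \<Rightarrow> 'h \<times> 'g"
  assumes Z: "Z \<noteq> {}" "closed Z" "convex Z"
    and lam: "\<And>n. 0 < lam n \<and> lam n \<le> 1"
    and Hs: "\<And>n. closed (Hs n) \<and> convex (Hs n) \<and> Z \<subseteq> Hs n"
    and x0: "x 0 = x0"
    and half: "\<And>n. xh n = x n + lam n *\<^sub>R (proj (Hs n) (x n) - x n)"
    and step: "\<And>n. x (Suc n) = proj (hspace x0 (x n) \<inter> C n) x0"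
    and C0: "C 0 = hspace x0 (xh 0)"
    and Ccases:
      "(\<forall>n\<ge>1. C n = hspace (x n) (xh n) \<inter> hspace (x (n - 1)) (xh (n - 1)))
       \<or> (\<forall>n\<ge>1. C n = hspace (x n) (xh n) \<inter> hspace x0 (x (n - 1)))
       \<or> (\<exists>\<tau>::nat \<Rightarrow> real. (\<forall>n\<ge>1. 0 < \<tau> n \<and> \<tau> n < 1) \<and>
            (\<forall>n\<ge>1. C n = hspace (x n) (xh n) \<inter>
                        hspace x0 (\<tau> n *\<^sub>R x n + (1 - \<tau> n) *\<^sub>R x (n - 1))))"
  shows "(\<forall>n. Z \<subseteq> hspace x0 (x n) \<inter> C n)
    \<and> (\<forall>n. norm (x (Suc n) - x0) \<ge> norm (x n - x0))
    \<and> summable (\<lambda>n. (norm (x (Suc n) - x n))\<^sup>2)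
    \<and> summable (\<lambda>n. (norm (xh n - x n))\<^sup>2)
    \<and> ((\<forall>z. weak_seq_cluster_point x z \<longrightarrow> z \<in> Z) \<longrightarrow> x \<longlonglongrightarrow> proj Z x0)"
proof -
  have Z_half: "Z \<subseteq> hspace (x n) (xh n)" for n
    using subset_hspace_relaxed_proj[of "Hs n" "lam n" "x n"] Hs[of n] lam[of n] Z(1)
    by (auto simp: half)
  obtain A where C: "\<And>n. 1 \<le> n \<Longrightarrow> C n = hspace (x n) (xh n) \<inter> A n"
    and A: "\<And>n. closed (A n) \<and> convex (A n)"
    and Z_A: "\<And>n. 1 \<le> n \<Longrightarrow> Z \<subseteq> hspace x0 (x n) \<Longrightarrow> Z \<subseteq> hspace x0 (x (n - 1)) \<Longrightarrow> Z \<subseteq> A n"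
    using cuts_common_form[OF Ccases Z_half] by blast
  have C_half: "closed (C n) \<and> convex (C n) \<and> C n \<subseteq> hspace (x n) (xh n)" for n
    using A[of n] C[of n] by (cases n) (auto simp: C0 x0 closed_hspace convex_hspace closed_Int convex_Int)
  have Z_sub: "Z \<subseteq> hspace x0 (x n) \<inter> C n" for n
  proof (rule subset_hspace_Int_cuts[OF Z _ _ x0 step])
    show "Z \<subseteq> C 0"
      using Z_half[of 0] by (simp add: C0 x0)
    show "Z \<subseteq> C (Suc n)" if "Z \<subseteq> hspace x0 (x n)" "Z \<subseteq> hspace x0 (x (Suc n))" for n
      using C[of "Suc n"] Z_A[of "Suc n"] Z_half[of "Suc n"] that by auto
  qed (use C_half in auto)
  interpret outer_approximation Z x0 "\<lambda>n. hspace x0 (x n) \<inter> C n" x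
    using Z_sub C_half
    by unfold_locales (auto simp: Z x0 step closed_hspace convex_hspace closed_Int convex_Int)
  have "norm (xh n - x n)^2 \<le> norm (x (Suc n) - x n)^2" for n
  proof -
    have "x (Suc n) \<in> hspace (x n) (xh n)"
      using x_Suc_mem[of n] C_half[of n] by blast
    from norm_square_le_if_mem_hspace[OF this] show ?thesis
      using zero_le_power2[of "norm (x (Suc n) - xh n)"] by linarith
  qed
  then have "summable (\<lambda>n. norm (xh n - x n)^2)"
    by (intro summable_comparison_test'[OF summable_step_square]) simp
  then show ?thesis
    using Z_sub norm_dist_mono summable_step_square tendsto_proj by blast
qed

end
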